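(* Let $G$ be an $n\times n$ Game of Primes grid (defined in the context) and suppose some cell of $G$ has at least four neighbors containing prime numbers. Then the cycle length of $G$ is even.
   Context: A Game of Primes (GOPM) grid of dimension $n$ is an $n\times n$ grid whose cells are filled with the $n^2$ natural numbers $a, a+d, a+2d,\dots,a+(n^2-1)d$ (for fixed integers $a\ge 1$, $d\ge 1$) in snake-like (boustrophedon) order: the first row is filled left to right starting with $a$ in the top-left cell, the second row right to left, the third row left to right, and so on. Two distinct cells are neighbors if they are adjacent horizontally, vertically or diagonally. Each cell is in one of two states, excited or dormant; a configuration ("day") assigns a state to every cell. For a configuration $s$ and a cell $c$, let $N_s(c)$ be the number of neighbors of $c$ that contain a prime number or are excited in $s$ (or both). The update map $F$ sends $s$ to $F(s)$ where: a cell dormant in $s$ becomes excited iff $N_s(c)\ge 3$ (otherwise stays dormant); a cell excited in $s$ becomes dormant iff $N_s(c)\ge 4$ or $N_s(c)=0$ (otherwise stays excited). Day $0$, $s_0$, has all cells dormant, and $s_{t+1}=F(s_t)$. Since there are finitely many configurations, the sequence $(s_t)$ is eventually periodic; the cycle length of $G$ is the least $p\ge 1$ such that $s_{t+p}=s_t$ for all sufficiently large $t$. *)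

theory Defs
  imports "HOL-Computational_Algebra.Primes"
begin

definition cells :: "nat \<Rightarrow> (nat \<times> nat) set" where
  "cells n = {0..<n} \<times> {0..<n}"

text \<open>Snake (boustrophedon) position: even rows left to right, odd rows right to left.\<close>
definition snake_index :: "nat \<Rightarrow> nat \<times> nat \<Rightarrow> nat" where
  "snake_index n c = (if even (fst c) then fst c * n + snd c else fst c * n + (n - 1 - snd c))"

definition cell_val :: "nat \<Rightarrow> nat \<Rightarrow> nat \<Rightarrow> nat \<times> nat \<Rightarrow> nat" where
  "cell_val n a d c = a + snake_index n c * d"

definition nbr :: "nat \<times> nat \<Rightarrow> nat \<times> nat \<Rightarrow> bool" where
  "nbr c c' \<longleftrightarrow> c \<noteq> c' \<and> (fst c \<le> fst c' + 1 \<and> fst c' \<le> fst c + 1)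
                 \<and> (snd c \<le> snd c' + 1 \<and> snd c' \<le> snd c + 1)"

definition neighbors :: "nat \<Rightarrow> nat \<times> nat \<Rightarrow> (nat \<times> nat) set" where
  "neighbors n c = {c' \<in> cells n. nbr c c'}"

text \<open>A configuration is the set of excited cells.\<close>
definition Ncount :: "nat \<Rightarrow> nat \<Rightarrow> nat \<Rightarrow> (nat \<times> nat) set \<Rightarrow> nat \<times> nat \<Rightarrow> nat" where
  "Ncount n a d s c = card {c' \<in> neighbors n c. prime (cell_val n a d c') \<or> c' \<in> s}"

definition step :: "nat \<Rightarrow> nat \<Rightarrow> nat \<Rightarrow> (nat \<times> nat) set \<Rightarrow> (nat \<times> nat) set" where
  "step n a d s = {c \<in> cells n.
      (c \<notin> s \<and> Ncount n a d s c \<ge> 3) \<or>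
      (c \<in> s \<and> \<not> (Ncount n a d s c \<ge> 4 \<or> Ncount n a d s c = 0))}"

definition day :: "nat \<Rightarrow> nat \<Rightarrow> nat \<Rightarrow> nat \<Rightarrow> (nat \<times> nat) set" where
  "day n a d t = (step n a d ^^ t) {}"

definition cycle_length :: "nat \<Rightarrow> nat \<Rightarrow> nat \<Rightarrow> nat" where
  "cycle_length n a d = (LEAST p. p \<ge> 1 \<and> (\<exists>T. \<forall>t\<ge>T. day n a d (t + p) = day n a d t))"

end

theory Submission
  imports Defs
begin

text \<open>A cell with at least four prime neighbours has \<open>N \<ge> 4\<close> in every configuration, whatever
  the states of the other cells, so the update rule flips it on every day: it is excited exactly
  on the odd days. A configuration sequence in which one cell alternates can only repeat after an
  even number of days, so the cycle length is even.\<close>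

lemma funpow_eventually_periodic:
  fixes f :: "'a \<Rightarrow> 'a"
  assumes "finite (range (\<lambda>t. (f ^^ t) x))"
  shows "\<exists>p\<ge>1. \<exists>T. \<forall>t\<ge>T. (f ^^ (t + p)) x = (f ^^ t) x"
proof -
  have "\<not> inj (\<lambda>t. (f ^^ t) x)"
    using assms finite_imageD infinite_UNIV_nat by blast
  then obtain i j where "i < j" and ij: "(f ^^ i) x = (f ^^ j) x"
    unfolding inj_def by (metis linorder_neq_iff)
  have "(f ^^ (t + (j - i))) x = (f ^^ t) x" if "t \<ge> i" for t
  proof -
    obtain k where "t = k + i"
      using \<open>t \<ge> i\<close> le_iff_add by (metis add.commute)
    then have "t + (j - i) = k + j"
      using \<open>i < j\<close> by simp
    then show ?thesis
      using \<open>t = k + i\<close> ij by (simp add: funpow_add)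
  qed
  moreover have "j - i \<ge> 1"
    using \<open>i < j\<close> by simp
  ultimately show ?thesis by blast
qed

lemma even_period_if_alternating:
  assumes "\<And>t. P (g t) \<longleftrightarrow> odd t" and "g (T + p) = g T"
  shows "even p"
  using assms(1)[of "T + p"] assms(1)[of T] assms(2) by auto

lemma day_subset_cells: "day n a d t \<subseteq> cells n"
  by (cases t) (auto simp: day_def step_def)

lemma day_eventually_periodic:
  "\<exists>p\<ge>1. \<exists>T. \<forall>t\<ge>T. day n a d (t + p) = day n a d t"
proof -
  have "range (day n a d) \<subseteq> Pow (cells n)"
    using day_subset_cells by blast
  then have "finite (range (\<lambda>t. (step n a d ^^ t) {}))"
    by (auto simp: day_def cells_def intro: finite_subset)
  then show ?thesis
    unfolding day_def by (rule funpow_eventually_periodic)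
qed

lemma cycle_length_period:
  "\<exists>T. \<forall>t\<ge>T. day n a d (t + cycle_length n a d) = day n a d t"
  unfolding cycle_length_def using LeastI_ex[OF day_eventually_periodic] by blast

lemma Ncount_ge_prime_neighbors:
  "card {c' \<in> neighbors n c. prime (cell_val n a d c')} \<le> Ncount n a d s c"
  unfolding Ncount_def neighbors_def cells_def by (rule card_mono) auto

lemma mem_step_iff_not_mem:
  assumes "c \<in> cells n" and "card {c' \<in> neighbors n c. prime (cell_val n a d c')} \<ge> 4"
  shows "c \<in> step n a d s \<longleftrightarrow> c \<notin> s"
  using assms Ncount_ge_prime_neighbors[of n c a d s] by (auto simp: step_def)

lemma mem_day_iff_odd:
  assumes "c \<in> cells n" and "card {c' \<in> neighbors n c. prime (cell_val n a d c')} \<ge> 4"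
  shows "c \<in> day n a d t \<longleftrightarrow> odd t"
  by (induction t) (simp_all add: day_def mem_step_iff_not_mem[OF assms])

theorem theorem4p2:
  fixes n a d :: nat
  assumes "a \<ge> 1" and "d \<ge> 1"
    and "\<exists>c\<in>cells n. card {c' \<in> neighbors n c. prime (cell_val n a d c')} \<ge> 4"
  shows "even (cycle_length n a d)"
proof -
  obtain c where "c \<in> cells n" "card {c' \<in> neighbors n c. prime (cell_val n a d c')} \<ge> 4"
    using assms(3) by blast
  then have alternating: "c \<in> day n a d t \<longleftrightarrow> odd t" for t
    by (rule mem_day_iff_odd)
  obtain T where "day n a d (T + cycle_length n a d) = day n a d T"
    using cycle_length_period by blast
  with alternating show ?thesis
    by (rule even_period_if_alternating)
qed

end
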